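(* Let $\Omega$ be either the bidisk $\mathbb{D}^2$ or the unit ball $\mathbb{B}_2$ in $\mathbb{C}^2$, and let $\Phi(z_1,z_2)=(z_1^2+z_2^2,\ z_1^2z_2^2)$. Then $\Phi(\Omega)$ is open and $\Phi$ is a holomorphic proper map from $\Omega$ onto $\Phi(\Omega)$.
   Context: A holomorphic map $\Phi:\Omega\to\Omega'$ between domains is proper if $\Phi^{-1}(K)$ is compact for every compact $K\subseteq\Omega'$. *)

theory Defs
  imports "HOL-Analysis.Analysis"
begin

text \<open>We model \<open>\<complex>\<^sup>2\<close> as the product type \<open>complex \<times> complex\<close>
  (its norm is the Euclidean norm).\<close>

definition cscale2 :: "complex \<Rightarrow> complex \<times> complex \<Rightarrow> complex \<times> complex" where
  "cscale2 c v = (c * fst v, c * snd v)"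

definition holomorphic2_on ::
  "(complex \<times> complex \<Rightarrow> complex \<times> complex) \<Rightarrow> (complex \<times> complex) set \<Rightarrow> bool" where
  "holomorphic2_on F S \<longleftrightarrow>
     (\<forall>z\<in>S. \<exists>D. (F has_derivative D) (at z) \<and> (\<forall>c v. D (cscale2 c v) = cscale2 c (D v)))"

definition proper_map_on ::
  "('a::topological_space \<Rightarrow> 'b::topological_space) \<Rightarrow> 'a set \<Rightarrow> 'b set \<Rightarrow> bool" where
  "proper_map_on F S T \<longleftrightarrow> (\<forall>K. K \<subseteq> T \<and> compact K \<longrightarrow> compact {z\<in>S. F z \<in> K})"

definition bidisk :: "(complex \<times> complex) set" where
  "bidisk = {(z1, z2). cmod z1 < 1 \<and> cmod z2 < 1}"

definition unit_ball2 :: "(complex \<times> complex) set" where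
  "unit_ball2 = {(z1, z2). (cmod z1)\<^sup>2 + (cmod z2)\<^sup>2 < 1}"

definition Phi :: "complex \<times> complex \<Rightarrow> complex \<times> complex" where
  "Phi z = ((fst z)\<^sup>2 + (snd z)\<^sup>2, (fst z)\<^sup>2 * (snd z)\<^sup>2)"

end

theory Submission
  imports Defs
begin

text \<open>
  \<open>\<Phi>\<close> is the composition of \<open>(z\<^sub>1, z\<^sub>2) \<mapsto> (z\<^sub>1\<^sup>2, z\<^sub>2\<^sup>2)\<close> with the map sending a pair to
  its elementary symmetric functions; hence \<open>\<Phi>\<close> is onto \<open>\<complex>\<^sup>2\<close>, and \<open>\<Phi> w = \<Phi> z\<close> forces
  \<open>(|w\<^sub>1|, |w\<^sub>2|)\<close> to be \<open>(|z\<^sub>1|, |z\<^sub>2|)\<close> up to order. Both domains are described by a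
  symmetric condition on \<open>(|z\<^sub>1|, |z\<^sub>2|)\<close>, so they are full fibres of \<open>\<Phi>\<close>.
  Since the roots of a monic quadratic are bounded by its coefficients, \<open>\<Phi>\<close> is proper on
  \<open>\<complex>\<^sup>2\<close>, hence a closed map; so \<open>\<Phi>(\<Omega>)\<close> is the complement of the closed set \<open>\<Phi>(\<complex>\<^sup>2 - \<Omega>)\<close>,
  and properness restricts to the saturated set \<open>\<Omega>\<close>.
\<close>

lemma sum_prod_eq_imp_eq_or_swap:
  fixes a b c d :: "'a::idom"
  assumes "a + b = c + d" "a * b = c * d"
  shows "(a = c \<and> b = d) \<or> (a = d \<and> b = c)"
proof -
  have "(a - c) * (a - d) = a * a - a * (c + d) + c * d" by (simp add: algebra_simps)
  also have "\<dots> = a * a - a * (a + b) + a * b" using assms by simp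
  also have "\<dots> = 0" by (simp add: algebra_simps)
  finally have "a = c \<or> a = d" by simp
  then show ?thesis using assms by auto
qed

lemma norm_le_one_plus_sum_prod:
  fixes a b :: "'a::real_normed_field"
  shows "norm a \<le> 1 + norm (a + b) + norm (a * b)"
proof (cases "norm a \<le> 1")
  case True
  then show ?thesis using norm_ge_zero[of "a + b"] norm_ge_zero[of "a * b"] by linarith
next
  case False
  have "a * a = (a + b) * a - a * b" by (simp add: algebra_simps)
  then have "norm a * norm a \<le> norm (a + b) * norm a + norm (a * b)"
    by (metis norm_mult norm_triangle_ineq4)
  also have "\<dots> \<le> (norm (a + b) + norm (a * b)) * norm a"
    using False mult_left_mono[of 1 "norm a" "norm (a * b)"] by (simp add: algebra_simps)
  finally have "norm a * norm a \<le> (norm (a + b) + norm (a * b)) * norm a" .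
  moreover have "0 < norm a" using False by linarith
  ultimately have "norm a \<le> norm (a + b) + norm (a * b)"
    by (rule mult_right_le_imp_le)
  then show ?thesis by simp
qed

lemma compact_vimage_if_bounded_sublevels:
  fixes f :: "'a::heine_borel \<Rightarrow> 'b::real_normed_vector"
  assumes "continuous_on UNIV f" and "\<And>B. bounded {x. norm (f x) \<le> B}" and "compact U"
  shows "compact (f -` U)"
proof -
  obtain B where "\<forall>u\<in>U. norm u \<le> B"
    using compact_imp_bounded[OF \<open>compact U\<close>] unfolding bounded_iff by blast
  then have "f -` U \<subseteq> {x. norm (f x) \<le> B}" by auto
  then have "bounded (f -` U)" by (rule bounded_subset[OF assms(2)])
  moreover have "closed (f -` U)"
    by (rule closed_vimage[OF compact_imp_closed[OF \<open>compact U\<close>] assms(1)])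
  ultimately show ?thesis by (simp add: compact_eq_bounded_closed)
qed

lemma closed_image_if_compact_vimages:
  fixes f :: "'a::heine_borel \<Rightarrow> 'b::heine_borel"
  assumes "\<And>U. compact U \<Longrightarrow> compact (f -` U)" and "closed C"
  shows "closed (f ` C)"
proof -
  have "closedin (top_of_set UNIV) (f ` C)"
    by (rule proper_map[where S = UNIV]) (use assms in auto)
  then show ?thesis by simp
qed

lemma open_image_of_saturated:
  assumes "surj f" and closed_images: "\<And>C. closed C \<Longrightarrow> closed (f ` C)" and "open S"
    and saturated: "\<And>x y. f x = f y \<Longrightarrow> y \<in> S \<Longrightarrow> x \<in> S"
  shows "open (f ` S)"
proof -
  have "f ` S = - f ` (- S)"
  proof
    show "f ` S \<subseteq> - f ` (- S)"
    proof
      fix y assume "y \<in> f ` S"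
      then obtain x where "x \<in> S" "y = f x" by blast
      then show "y \<in> - f ` (- S)" using saturated[of _ x] by auto
    qed
    show "- f ` (- S) \<subseteq> f ` S"
    proof
      fix y assume "y \<in> - f ` (- S)"
      moreover obtain x where "y = f x" using surjD[OF \<open>surj f\<close>] by blast
      ultimately show "y \<in> f ` S" by blast
    qed
  qed
  moreover have "closed (f ` (- S))"
    using closed_images \<open>open S\<close> by (simp add: closed_Compl)
  ultimately show ?thesis by (simp add: open_Compl)
qed

lemma continuous_on_Phi: "continuous_on S Phi"
  unfolding Phi_def by (intro continuous_intros)

lemma holomorphic2_on_Phi: "holomorphic2_on Phi S"
  unfolding holomorphic2_on_def
proof
  fix z :: "complex \<times> complex"
  obtain x y where z: "z = (x, y)" by force
  define D where "D = (\<lambda>v::complex \<times> complex. (2 * x * fst v + 2 * y * snd v,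
      2 * x * y\<^sup>2 * fst v + 2 * x\<^sup>2 * y * snd v))"
  have "(Phi has_derivative D) (at z)"
    unfolding Phi_def D_def z
    by (auto intro!: derivative_eq_intros ext simp: algebra_simps power2_eq_square)
  moreover have "\<forall>c v. D (cscale2 c v) = cscale2 c (D v)"
    by (auto simp: D_def cscale2_def algebra_simps)
  ultimately show "\<exists>D. (Phi has_derivative D) (at z) \<and> (\<forall>c v. D (cscale2 c v) = cscale2 c (D v))"
    by blast
qed

lemma surj_Phi: "surj Phi"
proof -
  have "y \<in> range Phi" for y
  proof -
    obtain s p where y: "y = (s, p)" by force
    define r where "r = csqrt (s\<^sup>2 - 4 * p)"
    define a where "a = (s + r) / 2"
    define b where "b = (s - r) / 2"
    have "a + b = s" by (simp add: a_def b_def field_simps)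
    moreover have "a * b = (s\<^sup>2 - r\<^sup>2) / 4"
      by (simp add: a_def b_def field_simps power2_eq_square)
    then have "a * b = p" by (simp add: r_def)
    ultimately have "Phi (csqrt a, csqrt b) = y" by (simp add: Phi_def y)
    then show ?thesis by (metis rangeI)
  qed
  then show ?thesis by blast
qed

text \<open>\<open>|z\<^sub>1|\<^sup>2, |z\<^sub>2|\<^sup>2\<close> are the moduli of the roots of \<open>t\<^sup>2 - s t + p\<close> where \<open>\<Phi> z = (s, p)\<close>.\<close>
lemma norm_sq_le_Phi: "(norm z)\<^sup>2 \<le> 2 + 4 * norm (Phi z)"
proof -
  obtain x y where z: "z = (x, y)" by force
  have Phi_z: "Phi z = (x\<^sup>2 + y\<^sup>2, x\<^sup>2 * y\<^sup>2)" by (simp add: Phi_def z)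
  have "cmod (x\<^sup>2 + y\<^sup>2) \<le> norm (Phi z)" "cmod (x\<^sup>2 * y\<^sup>2) \<le> norm (Phi z)"
    unfolding Phi_z by (rule norm_fst_le, rule norm_snd_le)
  moreover have "cmod (x\<^sup>2) \<le> 1 + cmod (x\<^sup>2 + y\<^sup>2) + cmod (x\<^sup>2 * y\<^sup>2)"
    and "cmod (y\<^sup>2) \<le> 1 + cmod (x\<^sup>2 + y\<^sup>2) + cmod (x\<^sup>2 * y\<^sup>2)"
    using norm_le_one_plus_sum_prod[of "x\<^sup>2" "y\<^sup>2"] norm_le_one_plus_sum_prod[of "y\<^sup>2" "x\<^sup>2"]
    by (simp_all add: add.commute mult.commute)
  moreover have "(norm z)\<^sup>2 = cmod (x\<^sup>2) + cmod (y\<^sup>2)"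
    by (simp add: z norm_Pair norm_power)
  ultimately show ?thesis by linarith
qed

lemma bounded_Phi_sublevel: "bounded {z. norm (Phi z) \<le> B}"
proof -
  have "norm z \<le> sqrt (2 + 4 * B)" if "norm (Phi z) \<le> B" for z
    using norm_sq_le_Phi[of z] that by (intro real_le_rsqrt) linarith
  then show ?thesis
    unfolding bounded_iff by (intro exI[of _ "sqrt (2 + 4 * B)"]) simp
qed

lemma compact_vimage_Phi: "compact U \<Longrightarrow> compact (Phi -` U)"
  by (rule compact_vimage_if_bounded_sublevels[OF continuous_on_Phi bounded_Phi_sublevel])

lemma Phi_eq_imp_norms_eq_or_swap:
  assumes "Phi (w1, w2) = Phi (z1, z2)"
  shows "(cmod w1 = cmod z1 \<and> cmod w2 = cmod z2) \<or> (cmod w1 = cmod z2 \<and> cmod w2 = cmod z1)"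
proof -
  have "w1\<^sup>2 + w2\<^sup>2 = z1\<^sup>2 + z2\<^sup>2" "w1\<^sup>2 * w2\<^sup>2 = z1\<^sup>2 * z2\<^sup>2"
    using assms by (simp_all add: Phi_def)
  then have "(w1\<^sup>2 = z1\<^sup>2 \<and> w2\<^sup>2 = z2\<^sup>2) \<or> (w1\<^sup>2 = z2\<^sup>2 \<and> w2\<^sup>2 = z1\<^sup>2)"
    by (rule sum_prod_eq_imp_eq_or_swap)
  moreover have norm_eq: "cmod a = cmod b" if "a\<^sup>2 = b\<^sup>2" for a b :: complex
    using that by (metis norm_power power2_eq_imp_eq norm_ge_zero)
  ultimately show ?thesis by (blast dest: norm_eq)
qed

lemma Phi_saturated_if_symmetric_in_norms:
  assumes \<Omega>: "\<Omega> = {(z1, z2). P (cmod z1) (cmod z2)}" and sym: "\<And>r s. P r s \<Longrightarrow> P s r"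
    and "Phi (w1, w2) = Phi (z1, z2)" and "(z1, z2) \<in> \<Omega>"
  shows "(w1, w2) \<in> \<Omega>"
  using Phi_eq_imp_norms_eq_or_swap[OF assms(3)] assms(4) sym unfolding \<Omega> by auto

lemma Phi_saturated_bidisk: "Phi w = Phi z \<Longrightarrow> z \<in> bidisk \<Longrightarrow> w \<in> bidisk"
  using Phi_saturated_if_symmetric_in_norms[of bidisk "\<lambda>r s. r < 1 \<and> s < 1", OF bidisk_def]
  by (metis prod.collapse)

lemma Phi_saturated_unit_ball2: "Phi w = Phi z \<Longrightarrow> z \<in> unit_ball2 \<Longrightarrow> w \<in> unit_ball2"
  using Phi_saturated_if_symmetric_in_norms[of unit_ball2 "\<lambda>r s. r\<^sup>2 + s\<^sup>2 < 1", OF unit_ball2_def]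
  by (metis add.commute prod.collapse)

lemma open_bidisk: "open bidisk"
proof -
  have "bidisk = {z. cmod (fst z) < 1 \<and> cmod (snd z) < 1}"
    by (auto simp: bidisk_def)
  moreover have "open {z::complex \<times> complex. cmod (fst z) < 1 \<and> cmod (snd z) < 1}"
    by (intro open_Collect_conj open_Collect_less continuous_intros)
  ultimately show ?thesis by simp
qed

lemma open_unit_ball2: "open unit_ball2"
proof -
  have "unit_ball2 = {z. (cmod (fst z))\<^sup>2 + (cmod (snd z))\<^sup>2 < 1}"
    by (auto simp: unit_ball2_def)
  moreover have "open {z::complex \<times> complex. (cmod (fst z))\<^sup>2 + (cmod (snd z))\<^sup>2 < 1}"
    by (intro open_Collect_less continuous_intros)
  ultimately show ?thesis by simp
qed

theorem proposition6p2:
  fixes \<Omega> :: "(complex \<times> complex) set"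
  assumes "\<Omega> = bidisk \<or> \<Omega> = unit_ball2"
  shows "open (Phi ` \<Omega>) \<and> holomorphic2_on Phi \<Omega> \<and> proper_map_on Phi \<Omega> (Phi ` \<Omega>)"
proof (intro conjI)
  have saturated: "\<And>w z. Phi w = Phi z \<Longrightarrow> z \<in> \<Omega> \<Longrightarrow> w \<in> \<Omega>"
    using assms Phi_saturated_bidisk Phi_saturated_unit_ball2 by blast
  have "open \<Omega>" using assms open_bidisk open_unit_ball2 by blast
  have closed_images: "\<And>C. closed C \<Longrightarrow> closed (Phi ` C)"
    using closed_image_if_compact_vimages compact_vimage_Phi .
  show "open (Phi ` \<Omega>)"
    by (rule open_image_of_saturated[OF surj_Phi closed_images \<open>open \<Omega>\<close> saturated])
  show "holomorphic2_on Phi \<Omega>" by (rule holomorphic2_on_Phi)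
  show "proper_map_on Phi \<Omega> (Phi ` \<Omega>)"
    unfolding proper_map_on_def
  proof (intro allI impI)
    fix K assume K: "K \<subseteq> Phi ` \<Omega> \<and> compact K"
    then have "{z \<in> \<Omega>. Phi z \<in> K} = Phi -` K"
      using saturated by fastforce
    then show "compact {z \<in> \<Omega>. Phi z \<in> K}" using compact_vimage_Phi K by simp
  qed
qed

end
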